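(* Let $\mathcal{X}=\{\mathbf{x}_1,\dots,\mathbf{x}_N\}\subset\mathbb{R}^d$ with $N\ge2$ and with pairwise distinct points, i.e. $\mathbf{x}_i\neq\mathbf{x}_j$ for $i\ne j$. Define the leave-one-out (LOO) total log-likelihood of the adaptive KDE model $$L_{\text{LOO}}(\sigma_1,\dots,\sigma_N)=\sum_{i=1}^N\log\sum_{j\neq i}\mathcal{N}(\mathbf{x}_i;\mathbf{x}_j,\sigma_j^2\mathbf{I}),\qquad \sigma\in(0,\infty)^N.$$ Then there exists $\varepsilon>0$, depending only on the dataset, such that every maximizer $\sigma^*\in(0,\infty)^N$ of $L_{\text{LOO}}$ satisfies $\sigma_j^*\ge\varepsilon$ for all $j=1,\dots,N$. In particular, no optimal solution of the LOO maximum log-likelihood problem exhibits data-copying (no bandwidth tends to $0^+$).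
   Context: $\mathcal{N}(\mathbf{x};\boldsymbol\mu,\sigma^2\mathbf{I})=(2\pi\sigma^2)^{-d/2}\exp\!\big(-\lVert\mathbf{x}-\boldsymbol\mu\rVert^2/(2\sigma^2)\big)$ denotes the isotropic Gaussian density on $\mathbb{R}^d$. "Data-copying" means that some bandwidth $\sigma_j\to0^+$. *)

theory Defs
  imports "HOL-Analysis.Analysis"
begin

definition gauss_density :: "'a::euclidean_space \<Rightarrow> 'a \<Rightarrow> real \<Rightarrow> real" where
  "gauss_density x mu s2 =
     (2 * pi * s2) powr (- real DIM('a) / 2) * exp (- (norm (x - mu))\<^sup>2 / (2 * s2))"

definition L_LOO :: "nat \<Rightarrow> (nat \<Rightarrow> 'a::euclidean_space) \<Rightarrow> (nat \<Rightarrow> real) \<Rightarrow> real" where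
  "L_LOO N x sg =
     (\<Sum>i<N. ln (\<Sum>j\<in>{..<N} - {i}. gauss_density (x i) (x j) ((sg j)\<^sup>2)))"

end

theory Submission imports Defs begin

text \<open>For a fixed point x and centre mu at distance r, the Gaussian density in the variance s
  behaves like s powr (-d/2) * exp (-r^2/(2s)), which increases on the whole range s \<le> r^2/d.
  Hence a bandwidth below the threshold eps = m / sqrt d, with m the minimal distance between
  data points, can be raised to eps: this increases every leave-one-out kernel centred at that
  point, strictly for each of the (at least one) other data points, so it strictly increases the
  LOO likelihood and the original bandwidths were not a maximizer.\<close>

lemma gauss_density_pos:
  fixes x mu :: "'a::euclidean_space"
  assumes "s > 0"
  shows "gauss_density x mu s > 0"
  using assms unfolding gauss_density_def by simp

lemma gauss_density_eq_exp:
  fixes x mu :: "'a::euclidean_space"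
  assumes "s > 0"
  shows "gauss_density x mu s =
           exp (- real DIM('a) / 2 * ln (2 * pi * s) - (norm (x - mu))\<^sup>2 / (2 * s))"
  using assms unfolding gauss_density_def by (simp add: powr_def exp_add[symmetric] mult.commute)

lemma gauss_density_strict_mono_variance:
  fixes x mu :: "'a::euclidean_space"
  assumes "0 < s" "s < t" and "t * real DIM('a) \<le> (norm (x - mu))\<^sup>2"
  shows "gauss_density x mu s < gauss_density x mu t"
proof -
  define d where "d = real DIM('a)"
  define r2 where "r2 = (norm (x - mu))\<^sup>2"
  have "d \<ge> 1" unfolding d_def by (simp add: DIM_positive Suc_le_eq)
  have "ln (t / s) < t / s - 1"
    using ln_add_one_self_less_self[of "t / s - 1"] assms by simp
  then have "d * ln (t / s) < d * (t / s - 1)" using \<open>d \<ge> 1\<close> by simp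
  also have "\<dots> = d * t * (t - s) / (s * t)" using assms by (simp add: field_simps)
  also have "\<dots> \<le> r2 * (t - s) / (s * t)"
    using assms unfolding d_def r2_def by (intro divide_right_mono mult_right_mono) (auto simp: mult.commute)
  also have "\<dots> = r2 / s - r2 / t" using assms by (simp add: field_simps)
  finally have "d * ln (t / s) < r2 / s - r2 / t" .
  moreover have "ln (2 * pi * t) - ln (2 * pi * s) = ln (t / s)"
    using assms by (simp add: ln_mult ln_div)
  ultimately have "- d / 2 * ln (2 * pi * s) - r2 / (2 * s) < - d / 2 * ln (2 * pi * t) - r2 / (2 * t)"
    by (simp add: field_simps)
  then show ?thesis
    using assms unfolding d_def r2_def
    by (simp add: gauss_density_eq_exp[OF \<open>0 < s\<close>] gauss_density_eq_exp[of t])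
qed

lemma finite_inj_on_separated:
  fixes x :: "'i \<Rightarrow> 'a::metric_space"
  assumes "finite A" "inj_on x A"
  obtains m where "m > 0" "\<And>i k. i \<in> A \<Longrightarrow> k \<in> A \<Longrightarrow> i \<noteq> k \<Longrightarrow> m \<le> dist (x i) (x k)"
proof -
  define D where "D = insert 1 ((\<lambda>(i, k). dist (x i) (x k)) ` {(i, k) \<in> A \<times> A. i \<noteq> k})"
  have "finite D" using assms(1) unfolding D_def by (auto intro: finite_subset[of _ "A \<times> A"])
  have "r > 0" if "r \<in> D" for r
    using that assms(2) unfolding D_def by (auto simp: inj_on_def)
  then have "Min D > 0" using \<open>finite D\<close> unfolding D_def by simp
  moreover have "Min D \<le> dist (x i) (x k)" if "i \<in> A" "k \<in> A" "i \<noteq> k" for i k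
    using \<open>finite D\<close> that unfolding D_def by (intro Min_le) auto
  ultimately show ?thesis using that by blast
qed

definition loo_mixture :: "nat \<Rightarrow> (nat \<Rightarrow> 'a::euclidean_space) \<Rightarrow> (nat \<Rightarrow> real) \<Rightarrow> nat \<Rightarrow> real" where
  "loo_mixture N x sg i = (\<Sum>k\<in>{..<N} - {i}. gauss_density (x i) (x k) ((sg k)\<^sup>2))"

lemma L_LOO_eq_sum_ln_loo_mixture: "L_LOO N x sg = (\<Sum>i<N. ln (loo_mixture N x sg i))"
  unfolding L_LOO_def loo_mixture_def ..

lemma loo_mixture_pos:
  assumes "N \<ge> 2" "i < N" and "\<And>k. k < N \<Longrightarrow> sg k > 0"
  shows "loo_mixture N x sg i > 0"
proof -
  define k where "k = (if i = 0 then 1 else (0::nat))"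
  have "k \<in> {..<N} - {i}" using assms unfolding k_def by auto
  then show ?thesis
    unfolding loo_mixture_def using assms(3)
    by (intro sum_pos2[of _ k] gauss_density_pos less_imp_le) (auto dest!: assms(3))
qed

lemma L_LOO_strict_increase:
  fixes x :: "nat \<Rightarrow> 'a::euclidean_space"
  assumes "N \<ge> 2" "j < N" and sg_pos: "\<And>k. k < N \<Longrightarrow> sg k > 0" and "sg j < b"
    and far: "\<And>i. i < N \<Longrightarrow> i \<noteq> j \<Longrightarrow> b * sqrt (real DIM('a)) \<le> norm (x i - x j)"
  shows "L_LOO N x sg < L_LOO N x (sg(j := b))"
proof -
  let ?tau = "sg(j := b)"
  have kernel_lt: "gauss_density (x i) (x j) ((sg j)\<^sup>2) < gauss_density (x i) (x j) (b\<^sup>2)"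
    if "i < N" "i \<noteq> j" for i
  proof (rule gauss_density_strict_mono_variance)
    show "0 < (sg j)\<^sup>2" "(sg j)\<^sup>2 < b\<^sup>2"
      using sg_pos[OF \<open>j < N\<close>] \<open>sg j < b\<close> by (auto intro: power_strict_mono)
    have "(b * sqrt (real DIM('a)))\<^sup>2 \<le> (norm (x i - x j))\<^sup>2"
      using far[OF that] sg_pos[OF \<open>j < N\<close>] \<open>sg j < b\<close> by (intro power_mono) auto
    then show "b\<^sup>2 * real DIM('a) \<le> (norm (x i - x j))\<^sup>2" by (simp add: power_mult_distrib)
  qed
  have kernel_le: "gauss_density (x i) (x k) ((sg k)\<^sup>2) \<le> gauss_density (x i) (x k) ((?tau k)\<^sup>2)"
    if "i < N" "k \<in> {..<N} - {i}" for i k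
    using kernel_lt[OF \<open>i < N\<close>] that by (cases "k = j") auto
  have mixture_le: "loo_mixture N x sg i \<le> loo_mixture N x ?tau i" if "i < N" for i
    unfolding loo_mixture_def using that by (intro sum_mono kernel_le)
  have mixture_lt: "loo_mixture N x sg i < loo_mixture N x ?tau i" if "i < N" "i \<noteq> j" for i
    unfolding loo_mixture_def using that \<open>j < N\<close> kernel_lt
    by (intro sum_strict_mono_ex1) (auto intro!: kernel_le less_imp_le bexI[of _ j])
  have mixture_pos: "loo_mixture N x sg i > 0" if "i < N" for i
    using loo_mixture_pos \<open>N \<ge> 2\<close> that sg_pos by blast
  define i where "i = (if j = 0 then 1 else (0::nat))"
  have "i < N" "i \<noteq> j" using assms(1,2) unfolding i_def by auto
  show ?thesis unfolding L_LOO_eq_sum_ln_loo_mixture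
  proof (rule sum_strict_mono_ex1)
    show "\<forall>l\<in>{..<N}. ln (loo_mixture N x sg l) \<le> ln (loo_mixture N x ?tau l)"
      using mixture_pos mixture_le by (auto intro: ln_mono order_less_le_trans)
    show "\<exists>l\<in>{..<N}. ln (loo_mixture N x sg l) < ln (loo_mixture N x ?tau l)"
      using mixture_pos[OF \<open>i < N\<close>] mixture_lt[OF \<open>i < N\<close> \<open>i \<noteq> j\<close>] \<open>i < N\<close>
      by (intro bexI[of _ i]) auto
  qed simp
qed

theorem theorem2:
  fixes N :: nat and x :: "nat \<Rightarrow> 'a::euclidean_space"
  assumes "N \<ge> 2"
    and "inj_on x {..<N}"
  shows "\<exists>\<epsilon>>0. \<forall>\<sigma> :: nat \<Rightarrow> real.
           ((\<forall>j<N. \<sigma> j > 0) \<and>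
            (\<forall>\<tau> :: nat \<Rightarrow> real. (\<forall>j<N. \<tau> j > 0) \<longrightarrow> L_LOO N x \<tau> \<le> L_LOO N x \<sigma>))
           \<longrightarrow> (\<forall>j<N. \<sigma> j \<ge> \<epsilon>)"
proof -
  obtain m where "m > 0" and sep: "\<And>i k. i < N \<Longrightarrow> k < N \<Longrightarrow> i \<noteq> k \<Longrightarrow> m \<le> dist (x i) (x k)"
    using finite_inj_on_separated[OF _ assms(2)] by auto
  define \<epsilon> where "\<epsilon> = m / sqrt (real DIM('a))"
  have "\<epsilon> > 0" unfolding \<epsilon>_def using \<open>m > 0\<close> by simp
  have far: "\<epsilon> * sqrt (real DIM('a)) \<le> norm (x i - x j)" if "i < N" "j < N" "i \<noteq> j" for i j
    using sep[OF that] unfolding \<epsilon>_def by (simp add: dist_norm)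
  show ?thesis
  proof (intro exI[of _ \<epsilon>] conjI \<open>\<epsilon> > 0\<close> allI impI)
    fix \<sigma> :: "nat \<Rightarrow> real" and j
    assume max: "(\<forall>j<N. \<sigma> j > 0) \<and>
            (\<forall>\<tau> :: nat \<Rightarrow> real. (\<forall>j<N. \<tau> j > 0) \<longrightarrow> L_LOO N x \<tau> \<le> L_LOO N x \<sigma>)"
      and "j < N"
    show "\<sigma> j \<ge> \<epsilon>"
    proof (rule ccontr)
      assume "\<not> \<sigma> j \<ge> \<epsilon>"
      then have "L_LOO N x \<sigma> < L_LOO N x (\<sigma>(j := \<epsilon>))"
        using max \<open>N \<ge> 2\<close> \<open>j < N\<close> far by (intro L_LOO_strict_increase) auto
      moreover have "L_LOO N x (\<sigma>(j := \<epsilon>)) \<le> L_LOO N x \<sigma>"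
        using max \<open>\<epsilon> > 0\<close> by simp
      ultimately show False by simp
    qed
  qed
qed

end
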